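(* Let $\pi\colon\mathcal W\to W$ be a continuous proper surjection between locally compact Hausdorff spaces, $C$ a co-meagre subset of $W$, and $\iota\colon C\to\mathcal W$ a continuous map with $\pi\circ\iota=\mathrm{id}_C$ and $\iota(C)$ dense in $\mathcal W$. Then $\pi$ and $\iota$ are weakly open.
   Context: A continuous map $f\colon Y\to X$ is weakly open if $f^{-1}(U)$ is dense in $Y$ whenever $U$ is open and dense in $X$. A set is co-meagre if its complement is a countable union of sets whose closures have empty interior. *)

theory Defs
  imports "HOL-Analysis.Analysis"
begin

definition nowhere_dense_in :: "'a topology \<Rightarrow> 'a set \<Rightarrow> bool" where
  "nowhere_dense_in X N \<longleftrightarrow> N \<subseteq> topspace X \<and> X interior_of (X closure_of N) = {}"

definition comeagre_in :: "'a topology \<Rightarrow> 'a set \<Rightarrow> bool" where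
  "comeagre_in X C \<longleftrightarrow> C \<subseteq> topspace X \<and>
     (\<exists>\<F>. countable \<F> \<and> (\<forall>N\<in>\<F>. nowhere_dense_in X N) \<and> topspace X - C = \<Union>\<F>)"

definition dense_in_space :: "'a topology \<Rightarrow> 'a set \<Rightarrow> bool" where
  "dense_in_space X S \<longleftrightarrow> S \<subseteq> topspace X \<and> X closure_of S = topspace X"

definition weakly_open_map :: "'a topology \<Rightarrow> 'b topology \<Rightarrow> ('a \<Rightarrow> 'b) \<Rightarrow> bool" where
  "weakly_open_map Y X f \<longleftrightarrow> continuous_map Y X f \<and>
     (\<forall>U. openin X U \<and> dense_in_space X U \<longrightarrow>
          dense_in_space Y {y \<in> topspace Y. f y \<in> U})"

end

theory Submission
  imports Defs
begin

text \<open>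
  For \<open>\<pi>\<close>: a nonempty open \<open>V\<close> upstairs
  meets the dense set \<open>\<iota>(C)\<close>, so its \<open>\<iota>\<close>-preimage is a nonempty set \<open>Q \<inter> C\<close> with \<open>Q\<close>
  open. An open dense \<open>U\<close> meets \<open>Q\<close>, and by the Baire category theorem the co-meagre set
  \<open>C\<close> meets \<open>Q \<inter> U\<close> in some \<open>c\<close>; then \<open>\<iota> c \<in> V\<close> and \<open>\<pi> (\<iota> c) = c \<in> U\<close>. For \<open>\<iota>\<close>: the
  \<open>\<pi>\<close>-preimage of a nonempty \<open>Q \<inter> C\<close> is open and nonempty, so it meets an open dense \<open>U\<close> in
  an open set, which in turn meets \<open>\<iota>(C)\<close> in some \<open>\<iota> c\<close>; then \<open>c = \<pi> (\<iota> c) \<in> Q \<inter> C\<close>.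
\<close>

lemma dense_in_space_iff_meets_open:
  "dense_in_space X S \<longleftrightarrow>
     S \<subseteq> topspace X \<and> (\<forall>T. openin X T \<and> T \<noteq> {} \<longrightarrow> S \<inter> T \<noteq> {})"
  by (simp add: dense_in_space_def dense_intersects_open)

lemma comeagre_in_imp_dense:
  assumes "completely_metrizable_space X \<or> locally_compact_space X \<and> regular_space X"
    and "comeagre_in X C"
  shows "dense_in_space X C"
proof -
  obtain \<F> where \<F>: "countable \<F>" "\<forall>N\<in>\<F>. nowhere_dense_in X N"
    and complement: "topspace X - C = \<Union>\<F>"
    using assms(2) unfolding comeagre_in_def by (elim conjE exE)
  have closures_interior: "X interior_of \<Union>((closure_of) X ` \<F>) = {}"
  proof (rule Baire_category_alt[OF assms(1)])
    show "countable ((closure_of) X ` \<F>)"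
      using \<F>(1) by (rule countable_image)
    show "closedin X T \<and> X interior_of T = {}" if "T \<in> (closure_of) X ` \<F>" for T
      using that \<F>(2) by (auto simp: nowhere_dense_in_def)
  qed
  have "N \<subseteq> X closure_of N" if "N \<in> \<F>" for N
    using \<F>(2) that by (simp add: nowhere_dense_in_def closure_of_subset)
  then have \<F>_closures: "\<Union>\<F> \<subseteq> \<Union>((closure_of) X ` \<F>)"
    by blast
  have "C \<inter> Q \<noteq> {}" if Q: "openin X Q" "Q \<noteq> {}" for Q
  proof
    assume "C \<inter> Q = {}"
    then have "Q \<subseteq> topspace X - C"
      using openin_subset[OF Q(1)] by blast
    also have "\<dots> \<subseteq> \<Union>((closure_of) X ` \<F>)"
      using complement \<F>_closures by simp
    finally have "Q \<subseteq> X interior_of \<Union>((closure_of) X ` \<F>)"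
      using Q(1) by (simp add: interior_of_maximal)
    with closures_interior Q(2) show False
      by blast
  qed
  moreover have "C \<subseteq> topspace X"
    using assms(2) by (simp add: comeagre_in_def)
  ultimately show ?thesis
    by (simp add: dense_in_space_iff_meets_open)
qed

lemma weakly_open_mapI:
  assumes "continuous_map Y X f"
    and "\<And>U V. \<lbrakk>openin X U; dense_in_space X U; openin Y V; V \<noteq> {}\<rbrakk>
                 \<Longrightarrow> \<exists>y\<in>V. f y \<in> U"
  shows "weakly_open_map Y X f"
  unfolding weakly_open_map_def
proof (intro conjI allI impI assms(1))
  fix U
  assume U: "openin X U \<and> dense_in_space X U"
  show "dense_in_space Y {y \<in> topspace Y. f y \<in> U}"
    unfolding dense_in_space_iff_meets_open
  proof (intro conjI allI impI)
    fix V
    assume V: "openin Y V \<and> V \<noteq> {}"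
    then obtain y where "y \<in> V" "f y \<in> U"
      using assms(2) U by meson
    then show "{y \<in> topspace Y. f y \<in> U} \<inter> V \<noteq> {}"
      using V openin_subset by blast
  qed auto
qed

lemma weakly_open_map_if_dense_section:
  assumes "continuous_map Y X p" and "dense_in_space X C"
    and "continuous_map (subtopology X C) Y s"
    and "\<And>c. c \<in> C \<Longrightarrow> p (s c) = c"
    and "dense_in_space Y (s ` C)"
  shows "weakly_open_map Y X p"
proof (rule weakly_open_mapI[OF assms(1)])
  fix U V
  assume U: "openin X U" "dense_in_space X U" and V: "openin Y V" "V \<noteq> {}"
  have "topspace (subtopology X C) = C"
    using assms(2) by (auto simp: dense_in_space_def)
  then have "openin (subtopology X C) {c \<in> C. s c \<in> V}"
    using openin_continuous_map_preimage[OF assms(3) V(1)] by simp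
  then obtain Q where Q: "openin X Q" "{c \<in> C. s c \<in> V} = Q \<inter> C"
    unfolding openin_subtopology by blast
  have "s ` C \<inter> V \<noteq> {}"
    using assms(5) V by (simp add: dense_in_space_iff_meets_open)
  then have "Q \<noteq> {}"
    using Q(2) by blast
  then have "U \<inter> Q \<noteq> {}"
    using Q(1) U(2) unfolding dense_in_space_iff_meets_open by blast
  moreover have "openin X (U \<inter> Q)"
    using Q(1) U(1) by (rule openin_Int[rotated])
  ultimately have "C \<inter> (U \<inter> Q) \<noteq> {}"
    using assms(2) unfolding dense_in_space_iff_meets_open by blast
  then obtain c where "c \<in> C" "c \<in> Q" "c \<in> U"
    by blast
  then have "s c \<in> V"
    using Q(2) by blast
  moreover have "p (s c) \<in> U"
    using assms(4) \<open>c \<in> C\<close> \<open>c \<in> U\<close> by simp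
  ultimately show "\<exists>y\<in>V. p y \<in> U" ..
qed

lemma dense_section_weakly_open_map:
  assumes "continuous_map Y X p" and "C \<subseteq> topspace X"
    and "continuous_map (subtopology X C) Y s"
    and "\<And>c. c \<in> C \<Longrightarrow> p (s c) = c"
    and "dense_in_space Y (s ` C)"
  shows "weakly_open_map (subtopology X C) Y s"
proof (rule weakly_open_mapI[OF assms(3)])
  fix U T
  assume U: "openin Y U" "dense_in_space Y U"
    and T: "openin (subtopology X C) T" "T \<noteq> {}"
  obtain Q where Q: "openin X Q" "T = Q \<inter> C"
    using T(1) by (auto simp: openin_subtopology)
  define P where "P = {y \<in> topspace Y. p y \<in> Q}"
  have P: "openin Y P"
    unfolding P_def using openin_continuous_map_preimage[OF assms(1) Q(1)] .
  obtain c where "c \<in> C" "c \<in> Q"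
    using T(2) Q(2) by blast
  moreover have "s c \<in> topspace Y"
    using continuous_map_image_subset_topspace[OF assms(3)] assms(2) \<open>c \<in> C\<close> by auto
  ultimately have "s c \<in> P"
    using assms(4) by (simp add: P_def)
  then have "openin Y (P \<inter> U) \<and> P \<inter> U \<noteq> {}"
    using P U by (auto simp: dense_in_space_iff_meets_open)
  then have "s ` C \<inter> (P \<inter> U) \<noteq> {}"
    using assms(5) by (simp add: dense_in_space_iff_meets_open)
  then obtain c' where "c' \<in> C" "s c' \<in> P" "s c' \<in> U"
    by blast
  then have "c' \<in> T"
    using Q(2) assms(4) by (simp add: P_def)
  with \<open>s c' \<in> U\<close> show "\<exists>c\<in>T. s c \<in> U"
    by blast
qed

theorem proposition3p11:
  fixes WW :: "'a topology" and W :: "'b topology"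
    and \<pi> :: "'a \<Rightarrow> 'b" and \<iota> :: "'b \<Rightarrow> 'a" and C :: "'b set"
  assumes "locally_compact_space WW" and "Hausdorff_space WW"
    and "locally_compact_space W" and "Hausdorff_space W"
    and "continuous_map WW W \<pi>" and "proper_map WW W \<pi>"
    and "\<pi> ` topspace WW = topspace W"
    and "comeagre_in W C"
    and "continuous_map (subtopology W C) WW \<iota>"
    and "\<And>c. c \<in> C \<Longrightarrow> \<pi> (\<iota> c) = c"
    and "dense_in_space WW (\<iota> ` C)"
  shows "weakly_open_map WW W \<pi> \<and> weakly_open_map (subtopology W C) WW \<iota>"
proof
  have "dense_in_space W C"
    using assms(3,4,8)
    by (intro comeagre_in_imp_dense) (simp add: locally_compact_Hausdorff_imp_regular_space)
  then show "weakly_open_map WW W \<pi>"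
    by (rule weakly_open_map_if_dense_section[OF assms(5) _ assms(9-11)])
  have "C \<subseteq> topspace W"
    using assms(8) by (simp add: comeagre_in_def)
  then show "weakly_open_map (subtopology W C) WW \<iota>"
    by (rule dense_section_weakly_open_map[OF assms(5) _ assms(9-11)])
qed

end
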